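(* Let $v$ be a scalar-valued function on an open set $\Omega\subseteq\mathbb{R}^n$ ($n>1$), and let $\phi_1,\phi_2$ be scalar-valued functions on $\Omega$ such that $\underline{g}=\partial_{\underline{x}}\phi_1$ and $\underline{h}=\partial_{\underline{x}}\phi_2$ are two particular vector-valued solutions of the Clifford Riccati equation $\partial_{\underline{x}} f + f^2 = v$. For $K\in\mathbb{C}$ put $\alpha=K\exp(\phi_1-\phi_2)$. Then \[\underline{f}=\frac{\alpha\,\underline{g}-\underline{h}}{\alpha-1}\] is also a (vector-valued) solution of $\partial_{\underline{x}} f + f^2 = v$ (wherever $\alpha\neq 1$).
   Context: $\mathbb{R}_{0,n}$ is the real Clifford algebra generated by an orthonormal basis $e_1,\dots,e_n$ of $\mathbb{R}^n$ with relations $e_je_k+e_ke_j=-2\delta_{jk}$; $\mathbb{C}_n=\mathbb{R}_{0,n}\otimes\mathbb{C}$. The Dirac operator is $\partial_{\underline{x}}=\sum_{j=1}^n e_j\partial_{x_j}$, acting from the left on Clifford-valued functions. *)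

theory Defs
  imports "HOL-Analysis.Analysis"
begin

text \<open>Complex Clifford algebra C_n = R_{0,n} (x) C, with basis vectors indexed by a finite
linearly ordered type 'n (so n = CARD('n)).  An element is given by its coefficients
on the basis blades e_A, A a subset of 'n (e_A = product of e_i, i in A, in increasing order).\<close>

type_synonym 'n clif = "'n set \<Rightarrow> complex"

definition clif_scalar :: "complex \<Rightarrow> 'n clif" where
  "clif_scalar c = (\<lambda>A. if A = {} then c else 0)"

definition clif_e :: "'n \<Rightarrow> 'n clif" where
  "clif_e j = (\<lambda>A. if A = {j} then 1 else 0)"

definition clif_add :: "'n clif \<Rightarrow> 'n clif \<Rightarrow> 'n clif" where
  "clif_add a b = (\<lambda>A. a A + b A)"

definition clif_smult :: "complex \<Rightarrow> 'n clif \<Rightarrow> 'n clif" where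
  "clif_smult c a = (\<lambda>A. c * a A)"

text \<open>Sign of e_A e_B = sign A B * e_{A symdiff B}, using e_i e_j = - e_j e_i (i ~= j)
and e_i^2 = -1.\<close>
definition clif_sign :: "'n::linorder set \<Rightarrow> 'n set \<Rightarrow> complex" where
  "clif_sign A B = (-1) ^ (card {(i, j). i \<in> A \<and> j \<in> B \<and> j < i} + card (A \<inter> B))"

definition clif_mult :: "'n::{finite,linorder} clif \<Rightarrow> 'n clif \<Rightarrow> 'n clif" where
  "clif_mult a b = (\<lambda>C. \<Sum>A\<in>UNIV. clif_sign A ((A - C) \<union> (C - A)) * a A * b ((A - C) \<union> (C - A)))"

definition clif_partial :: "('n::finite) \<Rightarrow> ((real, 'n) vec \<Rightarrow> 'n clif) \<Rightarrow> (real, 'n) vec \<Rightarrow> 'n clif" where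
  "clif_partial j F x = (\<lambda>A. vector_derivative (\<lambda>t. F (x + t *\<^sub>R axis j 1) A) (at 0))"

definition has_partials :: "((real, 'n::finite) vec) set \<Rightarrow> ((real, 'n) vec \<Rightarrow> 'n clif) \<Rightarrow> bool" where
  "has_partials S F \<longleftrightarrow>
     (\<forall>x\<in>S. \<forall>j A. (\<lambda>t. F (x + t *\<^sub>R axis j 1) A) differentiable (at 0))"

definition dirac :: "((real, 'n::{finite,linorder}) vec \<Rightarrow> 'n clif) \<Rightarrow> (real, 'n) vec \<Rightarrow> 'n clif" where
  "dirac F x = (\<lambda>C. \<Sum>j\<in>UNIV. clif_mult (clif_e j) (clif_partial j F x) C)"

definition riccati_solution ::
  "((real, 'n::{finite,linorder}) vec) set \<Rightarrow> ((real, 'n) vec \<Rightarrow> complex) \<Rightarrow> ((real, 'n) vec \<Rightarrow> 'n clif) \<Rightarrow> bool" where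
  "riccati_solution S v F \<longleftrightarrow> has_partials S F \<and>
     (\<forall>x\<in>S. clif_add (dirac F x) (clif_mult (F x) (F x)) = clif_scalar (v x))"

end

theory Submission
  imports Defs
begin

text \<open>Writing \<open>g = \<Sum> a\<^sub>k e\<^sub>k\<close> and \<open>h = \<Sum> b\<^sub>k e\<^sub>k\<close>, the Riccati expression of a vector field
  \<open>\<Sum> c\<^sub>k e\<^sub>k\<close> is \<open>\<Sum>\<^sub>j\<^sub>k (\<partial>\<^sub>j c\<^sub>k + c\<^sub>j c\<^sub>k) e\<^sub>j e\<^sub>k\<close>. The candidate is
  \<open>f = \<lambda> g + (1 - \<lambda>) h\<close> with \<open>\<lambda> = \<alpha> / (\<alpha> - 1)\<close>, and since \<open>\<partial>\<^sub>j \<alpha> = \<alpha> (a\<^sub>j - b\<^sub>j)\<close> one gets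
  \<open>\<partial>\<^sub>j \<lambda> = \<lambda> (1 - \<lambda>) (a\<^sub>j - b\<^sub>j)\<close>. This is exactly what makes every coefficient
  \<open>\<partial>\<^sub>j f\<^sub>k + f\<^sub>j f\<^sub>k\<close> equal to the affine combination \<open>\<lambda> (\<partial>\<^sub>j a\<^sub>k + a\<^sub>j a\<^sub>k) + (1 - \<lambda>) (\<partial>\<^sub>j b\<^sub>k + b\<^sub>j b\<^sub>k)\<close>,
  so the Riccati expression of \<open>f\<close> is \<open>\<lambda> v + (1 - \<lambda>) v = v\<close>.\<close>

definition coord_partial :: "'n::finite \<Rightarrow> ((real, 'n) vec \<Rightarrow> complex) \<Rightarrow> (real, 'n) vec \<Rightarrow> complex" where
  "coord_partial j f x = vector_derivative (\<lambda>t. f (x + t *\<^sub>R axis j 1)) (at 0)"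

definition clif_vec :: "('n::finite \<Rightarrow> complex) \<Rightarrow> 'n clif" where
  "clif_vec c = (\<lambda>C. \<Sum>k\<in>UNIV. c k * clif_e k C)"

lemma clif_vec_singleton [simp]: "clif_vec c {k} = c k"
proof -
  have "clif_vec c {k} = (\<Sum>j\<in>UNIV. if j = k then c j else 0)"
    unfolding clif_vec_def clif_e_def by (intro sum.cong) auto
  then show ?thesis by simp
qed

lemma clif_vec_not_singleton: "\<nexists>k. C = {k} \<Longrightarrow> clif_vec c C = 0"
  unfolding clif_vec_def clif_e_def by auto

lemma clif_smult_vec: "clif_smult z (clif_vec c) = clif_vec (\<lambda>k. z * c k)"
  unfolding clif_smult_def clif_vec_def by (simp add: sum_distrib_left mult.assoc)

lemma clif_add_vec: "clif_add (clif_vec c) (clif_vec d) = clif_vec (\<lambda>k. c k + d k)"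
  unfolding clif_add_def clif_vec_def by (simp add: sum.distrib distrib_right)

lemma clif_smult_add_vec:
  "clif_smult z (clif_add (clif_smult x (clif_vec c)) (clif_smult y (clif_vec d)))
     = clif_vec (\<lambda>k. z * x * c k + z * y * d k)"
  by (simp add: clif_smult_vec clif_add_vec algebra_simps)

lemma clif_mult_vec_right:
  "clif_mult a (clif_vec c) C = (\<Sum>k\<in>UNIV. c k * clif_mult a (clif_e k) C)"
  unfolding clif_mult_def clif_vec_def
  by (simp add: sum_distrib_left mult_ac) (rule sum.swap)

lemma clif_mult_vec_left:
  "clif_mult (clif_vec c) b C = (\<Sum>j\<in>UNIV. c j * clif_mult (clif_e j) b C)"
  unfolding clif_mult_def clif_vec_def
  by (simp add: sum_distrib_left sum_distrib_right mult_ac) (rule sum.swap)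

lemma clif_mult_vec_vec:
  "clif_mult (clif_vec c) (clif_vec d) C =
     (\<Sum>j\<in>UNIV. \<Sum>k\<in>UNIV. c j * d k * clif_mult (clif_e j) (clif_e k) C)"
  by (subst clif_mult_vec_left) (simp add: clif_mult_vec_right sum_distrib_left mult.assoc)

lemma clif_mult_e_scalar: "clif_mult (clif_e j) (clif_scalar z) C = z * clif_e j C"
proof -
  let ?D = "({j} - C) \<union> (C - {j})"
  have "clif_mult (clif_e j) (clif_scalar z) C =
      (\<Sum>A\<in>UNIV. if A = {j} then clif_sign {j} ?D * (if ?D = {} then z else 0) else 0)"
    unfolding clif_mult_def clif_e_def clif_scalar_def by (intro sum.cong) auto
  also have "\<dots> = clif_sign {j} ?D * (if ?D = {} then z else 0)"
    by simp
  also have "\<dots> = z * clif_e j C"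
    by (cases "C = {j}") (auto simp: clif_e_def clif_sign_def)
  finally show ?thesis .
qed

lemma clif_partial_vec:
  "clif_partial j (\<lambda>y. clif_vec (c y)) x = clif_vec (\<lambda>k. coord_partial j (\<lambda>y. c y k) x)"
proof
  fix C
  show "clif_partial j (\<lambda>y. clif_vec (c y)) x C = clif_vec (\<lambda>k. coord_partial j (\<lambda>y. c y k) x) C"
    by (cases "\<exists>k. C = {k}")
       (auto simp: clif_partial_def coord_partial_def clif_vec_not_singleton)
qed

lemma dirac_scalar:
  "dirac (\<lambda>y. clif_scalar (\<phi> y)) = (\<lambda>x. clif_vec (\<lambda>k. coord_partial k \<phi> x))"
proof (intro ext)
  fix x C
  have "clif_partial j (\<lambda>y. clif_scalar (\<phi> y)) x = clif_scalar (coord_partial j \<phi> x)" for j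
    unfolding clif_partial_def clif_scalar_def coord_partial_def by auto
  then show "dirac (\<lambda>y. clif_scalar (\<phi> y)) x C = clif_vec (\<lambda>k. coord_partial k \<phi> x) C"
    unfolding dirac_def clif_vec_def by (simp add: clif_mult_e_scalar)
qed

lemma has_partials_scalarD:
  fixes \<phi> :: "(real, 'n::finite) vec \<Rightarrow> complex"
  assumes "has_partials S (\<lambda>y. clif_scalar (\<phi> y))" "x \<in> S"
  shows "((\<lambda>t. \<phi> (x + t *\<^sub>R axis j 1)) has_vector_derivative coord_partial j \<phi> x) (at 0)"
proof -
  have "(\<lambda>t. clif_scalar (\<phi> (x + t *\<^sub>R axis j 1)) ({} :: 'n set)) differentiable (at 0)"
    using assms unfolding has_partials_def by simp
  then show ?thesis
    by (simp add: clif_scalar_def coord_partial_def vector_derivative_works)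
qed

lemma has_partials_vec_iff:
  "has_partials S (\<lambda>y. clif_vec (c y)) \<longleftrightarrow>
     (\<forall>x\<in>S. \<forall>j k. (\<lambda>t. c (x + t *\<^sub>R axis j 1) k) differentiable (at 0))"
  unfolding has_partials_def
proof (intro iffI ballI allI)
  fix x j k
  assume "\<forall>x\<in>S. \<forall>j A. (\<lambda>t. clif_vec (c (x + t *\<^sub>R axis j 1)) A) differentiable (at 0)" "x \<in> S"
  then have "(\<lambda>t. clif_vec (c (x + t *\<^sub>R axis j 1)) {k}) differentiable (at 0)"
    by blast
  then show "(\<lambda>t. c (x + t *\<^sub>R axis j 1) k) differentiable (at 0)"
    by simp
next
  fix x j A
  assume "\<forall>x\<in>S. \<forall>j k. (\<lambda>t. c (x + t *\<^sub>R axis j 1) k) differentiable (at 0)" "x \<in> S"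
  then show "(\<lambda>t. clif_vec (c (x + t *\<^sub>R axis j 1)) A) differentiable (at 0)"
    by (cases "\<exists>k. A = {k}") (auto simp: clif_vec_not_singleton)
qed

lemma riccati_expression_vec:
  "clif_add (dirac (\<lambda>y. clif_vec (c y)) x) (clif_mult (clif_vec (c x)) (clif_vec (c x))) C =
     (\<Sum>j\<in>UNIV. \<Sum>k\<in>UNIV.
        (coord_partial j (\<lambda>y. c y k) x + c x j * c x k) * clif_mult (clif_e j) (clif_e k) C)"
  unfolding clif_add_def dirac_def clif_partial_vec clif_mult_vec_vec
  by (simp add: clif_mult_vec_right algebra_simps sum.distrib)

lemma riccati_solution_vec_iff:
  "riccati_solution S v (\<lambda>y. clif_vec (c y)) \<longleftrightarrow>
     has_partials S (\<lambda>y. clif_vec (c y)) \<and>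
     (\<forall>x\<in>S. \<forall>C. (\<Sum>j\<in>UNIV. \<Sum>k\<in>UNIV.
        (coord_partial j (\<lambda>y. c y k) x + c x j * c x k) * clif_mult (clif_e j) (clif_e k) C)
        = clif_scalar (v x) C)"
  unfolding riccati_solution_def riccati_expression_vec [symmetric] fun_eq_iff by blast

lemma riccati_solution_vec_has_vector_derivative:
  assumes "riccati_solution S v (\<lambda>y. clif_vec (c y))" "x \<in> S"
  shows "((\<lambda>t. c (x + t *\<^sub>R axis j 1) k) has_vector_derivative coord_partial j (\<lambda>y. c y k) x) (at 0)"
  using assms unfolding riccati_solution_vec_iff has_partials_vec_iff
  by (simp add: coord_partial_def vector_derivative_works)

lemma riccati_solution_subset:
  "riccati_solution S v F \<Longrightarrow> T \<subseteq> S \<Longrightarrow> riccati_solution T v F"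
  unfolding riccati_solution_def has_partials_def by blast

lemma has_vector_derivative_exp_quotients:
  fixes s :: "real \<Rightarrow> complex" and K :: complex
  assumes s: "(s has_vector_derivative s') (at t)" and ne: "K * exp (s t) \<noteq> 1"
  shows "((\<lambda>u. K * exp (s u) / (K * exp (s u) - 1)) has_vector_derivative
           K * exp (s t) / (K * exp (s t) - 1) * (- 1 / (K * exp (s t) - 1)) * s') (at t)"
    and "((\<lambda>u. - 1 / (K * exp (s u) - 1)) has_vector_derivative
           - (K * exp (s t) / (K * exp (s t) - 1) * (- 1 / (K * exp (s t) - 1)) * s')) (at t)"
proof -
  have ne': "K * exp (s t) - 1 \<noteq> 0"
    using ne by simp
  have "((\<lambda>z. K * exp z / (K * exp z - 1)) has_field_derivative
      - (K * exp (s t)) / (K * exp (s t) - 1)\<^sup>2) (at (s t))"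
    using ne' by (auto intro!: derivative_eq_intros simp: power2_eq_square divide_simps)
      (simp add: algebra_simps)
  from field_vector_diff_chain_at [OF s this]
  show "((\<lambda>u. K * exp (s u) / (K * exp (s u) - 1)) has_vector_derivative
      K * exp (s t) / (K * exp (s t) - 1) * (- 1 / (K * exp (s t) - 1)) * s') (at t)"
    by (simp add: o_def power2_eq_square field_simps)
  have "((\<lambda>z. - 1 / (K * exp z - 1)) has_field_derivative
      K * exp (s t) / (K * exp (s t) - 1)\<^sup>2) (at (s t))"
    using ne' by (auto intro!: derivative_eq_intros simp: power2_eq_square divide_simps)
  from field_vector_diff_chain_at [OF s this]
  show "((\<lambda>u. - 1 / (K * exp (s u) - 1)) has_vector_derivative
      - (K * exp (s t) / (K * exp (s t) - 1) * (- 1 / (K * exp (s t) - 1)) * s')) (at t)"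
    by (simp add: o_def power2_eq_square field_simps)
qed

lemma riccati_affine_coefficient:
  fixes l m dl da db aj ak bj bk :: "'a::comm_ring_1"
  assumes "l + m = 1" "dl = l * m * (aj - bj)"
  shows "(l * da + m * db + dl * ak - dl * bk) + (l * aj + m * bj) * (l * ak + m * bk)
       = l * (da + aj * ak) + m * (db + bj * bk)"
proof -
  have m: "m = 1 - l"
    using assms(1) by (simp add: algebra_simps)
  show ?thesis
    unfolding assms(2) m by (simp add: algebra_simps)
qed

lemma riccati_solution_affine_combination:
  fixes a b :: "(real, 'n::{finite,linorder}) vec \<Rightarrow> 'n \<Rightarrow> complex"
    and l m :: "(real, 'n) vec \<Rightarrow> complex"
  assumes sol_a: "riccati_solution S v (\<lambda>y. clif_vec (a y))"
    and sol_b: "riccati_solution S v (\<lambda>y. clif_vec (b y))"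
    and sum_one: "\<And>x. x \<in> S \<Longrightarrow> l x + m x = 1"
    and deriv_l: "\<And>x j. x \<in> S \<Longrightarrow>
      ((\<lambda>t. l (x + t *\<^sub>R axis j 1)) has_vector_derivative l x * m x * (a x j - b x j)) (at 0)"
    and deriv_m: "\<And>x j. x \<in> S \<Longrightarrow>
      ((\<lambda>t. m (x + t *\<^sub>R axis j 1)) has_vector_derivative - (l x * m x * (a x j - b x j))) (at 0)"
  shows "riccati_solution S v (\<lambda>y. clif_vec (\<lambda>k. l y * a y k + m y * b y k))"
proof -
  define f where "f y k = l y * a y k + m y * b y k" for y k
  define dl where "dl x j = l x * m x * (a x j - b x j)" for x j
  define df where "df x j k = l x * coord_partial j (\<lambda>y. a y k) x
      + m x * coord_partial j (\<lambda>y. b y k) x + dl x j * a x k - dl x j * b x k" for x j k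
  have deriv_f: "((\<lambda>t. f (x + t *\<^sub>R axis j 1) k) has_vector_derivative df x j k) (at 0)"
    if "x \<in> S" for x j k
  proof -
    note da = riccati_solution_vec_has_vector_derivative [OF sol_a that, where j = j and k = k]
    note db = riccati_solution_vec_has_vector_derivative [OF sol_b that, where j = j and k = k]
    show ?thesis
      using has_vector_derivative_add [OF has_vector_derivative_mult [OF deriv_l [OF that, of j] da]
          has_vector_derivative_mult [OF deriv_m [OF that, of j] db]]
      by (simp add: f_def df_def dl_def algebra_simps)
  qed
  have "has_partials S (\<lambda>y. clif_vec (f y))"
    unfolding has_partials_vec_iff using deriv_f by (blast intro: differentiableI_vector)
  moreover have "(\<Sum>j\<in>UNIV. \<Sum>k\<in>UNIV.
        (coord_partial j (\<lambda>y. f y k) x + f x j * f x k) * clif_mult (clif_e j) (clif_e k) C)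
      = clif_scalar (v x) C" if x: "x \<in> S" for x C
  proof -
    let ?E = "\<lambda>c. \<Sum>j\<in>UNIV. \<Sum>k\<in>UNIV.
        (coord_partial j (\<lambda>y. c y k) x + c x j * c x k) * clif_mult (clif_e j) (clif_e k) C"
    have coeff: "coord_partial j (\<lambda>y. f y k) x + f x j * f x k
        = l x * (coord_partial j (\<lambda>y. a y k) x + a x j * a x k)
          + m x * (coord_partial j (\<lambda>y. b y k) x + b x j * b x k)" for j k
    proof -
      have "coord_partial j (\<lambda>y. f y k) x = df x j k"
        unfolding coord_partial_def using deriv_f [OF x] by (rule vector_derivative_at)
      then show ?thesis
        unfolding f_def df_def by (simp add: riccati_affine_coefficient [OF sum_one [OF x] dl_def])
    qed
    have "?E f = l x * ?E a + m x * ?E b"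
      unfolding coeff by (simp add: algebra_simps sum.distrib sum_distrib_left)
    also have "\<dots> = (l x + m x) * clif_scalar (v x) C"
      using sol_a sol_b x unfolding riccati_solution_vec_iff by (simp add: algebra_simps)
    finally show ?thesis
      using sum_one [OF x] by simp
  qed
  ultimately show ?thesis
    unfolding riccati_solution_vec_iff f_def by blast
qed

theorem proposition5p2:
  fixes \<Omega> :: "((real, 'n::{finite,linorder}) vec) set"
    and v \<phi>1 \<phi>2 :: "(real, 'n) vec \<Rightarrow> complex"
    and K :: complex
  assumes "open \<Omega>"
    and "CARD('n) \<ge> 2"
    and "has_partials \<Omega> (\<lambda>x. clif_scalar (\<phi>1 x))"
    and "has_partials \<Omega> (\<lambda>x. clif_scalar (\<phi>2 x))"
    and "riccati_solution \<Omega> v (dirac (\<lambda>x. clif_scalar (\<phi>1 x)))"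
    and "riccati_solution \<Omega> v (dirac (\<lambda>x. clif_scalar (\<phi>2 x)))"
  shows "riccati_solution {x \<in> \<Omega>. K * exp (\<phi>1 x - \<phi>2 x) \<noteq> 1} v
     (\<lambda>x. let \<alpha> = K * exp (\<phi>1 x - \<phi>2 x) in
        clif_smult (1 / (\<alpha> - 1))
          (clif_add (clif_smult \<alpha> (dirac (\<lambda>y. clif_scalar (\<phi>1 y)) x))
                    (clif_smult (-1) (dirac (\<lambda>y. clif_scalar (\<phi>2 y)) x))))"
proof -
  let ?S = "{x \<in> \<Omega>. K * exp (\<phi>1 x - \<phi>2 x) \<noteq> 1}"
  define a where "a y k = coord_partial k \<phi>1 y" for y k
  define b where "b y k = coord_partial k \<phi>2 y" for y k
  define l where "l y = 1 / (K * exp (\<phi>1 y - \<phi>2 y) - 1) * (K * exp (\<phi>1 y - \<phi>2 y))" for y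
  define m where "m y = 1 / (K * exp (\<phi>1 y - \<phi>2 y) - 1) * - 1" for y
  have sol_a: "riccati_solution ?S v (\<lambda>y. clif_vec (a y))"
    using riccati_solution_subset [OF assms(5), of ?S] by (auto simp: dirac_scalar a_def [abs_def])
  have sol_b: "riccati_solution ?S v (\<lambda>y. clif_vec (b y))"
    using riccati_solution_subset [OF assms(6), of ?S] by (auto simp: dirac_scalar b_def [abs_def])
  have deriv_diff: "((\<lambda>t. \<phi>1 (x + t *\<^sub>R axis j 1) - \<phi>2 (x + t *\<^sub>R axis j 1))
      has_vector_derivative a x j - b x j) (at 0)" if "x \<in> ?S" for x j
    unfolding a_def b_def using that
    by (intro has_vector_derivative_diff has_partials_scalarD [OF assms(3)]
        has_partials_scalarD [OF assms(4)]) auto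
  show ?thesis
    unfolding Let_def dirac_scalar clif_smult_add_vec
      l_def [symmetric] m_def [symmetric] a_def [symmetric] b_def [symmetric]
  proof (rule riccati_solution_affine_combination [OF sol_a sol_b])
    show "l x + m x = 1" if "x \<in> ?S" for x
      using that by (simp add: l_def m_def diff_divide_distrib [symmetric])
    show "((\<lambda>t. l (x + t *\<^sub>R axis j 1)) has_vector_derivative l x * m x * (a x j - b x j)) (at 0)"
      if "x \<in> ?S" for x j
      using has_vector_derivative_exp_quotients(1) [OF deriv_diff [OF that]] that
      by (simp add: l_def m_def)
    show "((\<lambda>t. m (x + t *\<^sub>R axis j 1)) has_vector_derivative - (l x * m x * (a x j - b x j))) (at 0)"
      if "x \<in> ?S" for x j
      using has_vector_derivative_exp_quotients(2) [OF deriv_diff [OF that]] that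
      by (simp add: l_def m_def)
  qed
qed

end
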